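(* For every $m\ge 1$ there is a market with $m$ items and $m+1$ unit-demand buyers whose maximum social welfare is $m+o(1)$ (as $m\to\infty$) such that: for some fixed selling order of the items there exists a subgame perfect equilibrium of the sequential first-price auction with revenue $1$, while for a different fixed selling order every subgame perfect equilibrium has revenue at least $m$.
   Context: Unit demand: buyer $i$ has values $v_{i,j}\ge0$ and $v_i(S)=\max_{j\in S}v_{i,j}$, $v_i(\emptyset)=0$; utility is quasi-linear. In a sequential first-price auction the items are sold one at a time in the given selling order, each by a sealed-bid first-price auction without reserve price: each buyer submits a nonnegative bid, a highest bidder wins (ties broken by a seller-chosen rule) and pays his bid. Full information. A subgame perfect equilibrium is a (pure) strategy profile that is a Nash equilibrium in every subgame; its revenue is the total payment on the equilibrium path. Social welfare is the sum of buyers' values for their bundles. *)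

theory Defs
  imports Complex_Main "HOL-Library.FuncSet"
begin

text \<open>Buyers are 0..<n, items are 0..<m. Values: v i j = value of buyer i for item j.
  A bid profile is a function nat => real (entries for non-buyers are 0).
  A history is the list of bid profiles of the auctions already held (full information:
  all bids are observed).\<close>

type_synonym profile = "nat \<Rightarrow> real"
type_synonym hist = "profile list"

definition bval :: "(nat \<Rightarrow> nat \<Rightarrow> real) \<Rightarrow> nat \<Rightarrow> nat set \<Rightarrow> real" where
  "bval v i S = (if S = {} then 0 else Max (v i ` S))"

text \<open>Selling order: a list enumerating the items 0..<m without repetition;
  the k-th auction sells item sigma ! k.\<close>
definition is_order :: "nat \<Rightarrow> nat list \<Rightarrow> bool" where
  "is_order m \<sigma> \<longleftrightarrow> distinct \<sigma> \<and> set \<sigma> = {..<m}"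

definition tie_rule :: "nat \<Rightarrow> (hist \<Rightarrow> profile \<Rightarrow> nat) \<Rightarrow> bool" where
  "tie_rule n \<tau> \<longleftrightarrow> (\<forall>h b. \<tau> h b < n \<and> (\<forall>j<n. b j \<le> b (\<tau> h b)))"

function play :: "nat \<Rightarrow> nat \<Rightarrow> (nat \<Rightarrow> hist \<Rightarrow> real) \<Rightarrow> hist \<Rightarrow> hist" where
  "play n m s h = (if length h < m
      then play n m s (h @ [\<lambda>i. if i < n then s i h else 0]) else h)"
  by auto
termination by (relation "measure (\<lambda>(n, m, s, h). m - length h)") auto

declare play.simps[simp del]

definition won :: "(hist \<Rightarrow> profile \<Rightarrow> nat) \<Rightarrow> hist \<Rightarrow> nat \<Rightarrow> nat set" where
  "won \<tau> H i = {k. k < length H \<and> \<tau> (take k H) (H ! k) = i}"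

definition utility :: "(nat \<Rightarrow> nat \<Rightarrow> real) \<Rightarrow> nat list \<Rightarrow> (hist \<Rightarrow> profile \<Rightarrow> nat)
    \<Rightarrow> nat \<Rightarrow> hist \<Rightarrow> real" where
  "utility v \<sigma> \<tau> i H = bval v i ((\<lambda>k. \<sigma> ! k) ` won \<tau> H i) - (\<Sum>k\<in>won \<tau> H i. (H ! k) i)"

definition revenue :: "(hist \<Rightarrow> profile \<Rightarrow> nat) \<Rightarrow> hist \<Rightarrow> real" where
  "revenue \<tau> H = (\<Sum>k<length H. (H ! k) (\<tau> (take k H) (H ! k)))"

definition valid_hist :: "nat \<Rightarrow> nat \<Rightarrow> hist \<Rightarrow> bool" where
  "valid_hist n m h \<longleftrightarrow> length h \<le> m \<and>
     (\<forall>b\<in>set h. \<forall>i. (i < n \<longrightarrow> 0 \<le> b i) \<and> (n \<le> i \<longrightarrow> b i = 0))"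

definition strategy_profile :: "nat \<Rightarrow> (nat \<Rightarrow> hist \<Rightarrow> real) \<Rightarrow> bool" where
  "strategy_profile n s \<longleftrightarrow> (\<forall>i<n. \<forall>h. 0 \<le> s i h)"

definition is_SPE :: "nat \<Rightarrow> nat \<Rightarrow> (nat \<Rightarrow> nat \<Rightarrow> real) \<Rightarrow> nat list
    \<Rightarrow> (hist \<Rightarrow> profile \<Rightarrow> nat) \<Rightarrow> (nat \<Rightarrow> hist \<Rightarrow> real) \<Rightarrow> bool" where
  "is_SPE n m v \<sigma> \<tau> s \<longleftrightarrow> strategy_profile n s \<and>
     (\<forall>h. valid_hist n m h \<and> length h < m \<longrightarrow>
        (\<forall>i<n. \<forall>s'. (\<forall>h'. 0 \<le> s' h') \<longrightarrow>
           utility v \<sigma> \<tau> i (play n m (s(i := s')) h) \<le> utility v \<sigma> \<tau> i (play n m s h)))"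

text \<open>Social welfare of an allocation a (item j goes to buyer a j) and its maximum.\<close>
definition welfare :: "(nat \<Rightarrow> nat \<Rightarrow> real) \<Rightarrow> nat \<Rightarrow> nat \<Rightarrow> (nat \<Rightarrow> nat) \<Rightarrow> real" where
  "welfare v n m a = (\<Sum>i<n. bval v i {j. j < m \<and> a j = i})"

definition opt_welfare :: "(nat \<Rightarrow> nat \<Rightarrow> real) \<Rightarrow> nat \<Rightarrow> nat \<Rightarrow> real" where
  "opt_welfare v n m = Max (welfare v n m ` ({..<m} \<rightarrow>\<^sub>E {..<n}))"

end

theory Submission
  imports Defs
begin

text \<open>The market: buyer 0 values every item at 1, buyer \<open>j + 1\<close> only wants item \<open>j\<close>, at value 1
  for \<open>j = 0\<close> and \<open>1 + 1 / (m + 1)\<^sup>2\<close> otherwise, so the optimal welfare is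
  \<open>m + (m - 1) / (m + 1)\<^sup>2\<close>.

  Selling item 0 first: buyers 0 and 1 bid 1 for it and the tie goes to buyer 0; afterwards
  everybody bids 0 and buyer \<open>k + 1\<close> gets item \<open>k\<close> for free, so the revenue is 1. Buyer 0 is kept
  in line by a threat: as long as he owns nothing, buyer \<open>k + 1\<close> matches his bid of 1 in auction
  \<open>k\<close> and wins the tie, so buyer 0 can only buy at a price of at least 1.

  Selling item 0 last: as long as buyer 0 owns nothing, every auction yields at least 1. If
  another buyer wins for less than 1, buyer 0 could outbid him and gain, since his continuation
  utility is at most 0. If buyer 0 wins, he pays at least the value of the item to the buyer who
  wants it; before the last auction this exceeds 1, so buyer 0 would rather abstain.\<close>

section \<open>Plays, payments and deviations\<close>

definition bid_profile :: "nat \<Rightarrow> (nat \<Rightarrow> hist \<Rightarrow> real) \<Rightarrow> hist \<Rightarrow> profile" where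
  "bid_profile n s h = (\<lambda>i. if i < n then s i h else 0)"

lemma bid_profile_upd: "i < n \<Longrightarrow> bid_profile n (s(i := s')) h = (bid_profile n s h)(i := s' h)"
  by (auto simp: bid_profile_def)

lemma play_step: "length h < m \<Longrightarrow> play n m s h = play n m s (h @ [bid_profile n s h])"
  by (subst play.simps) (simp add: bid_profile_def)

lemma play_complete: "m \<le> length h \<Longrightarrow> play n m s h = h"
  by (subst play.simps) simp

lemma play_extends:
  "length h \<le> m \<Longrightarrow> length (play n m s h) = m \<and> take (length h) (play n m s h) = h \<and>
    (\<forall>k. length h \<le> k \<and> k < m \<longrightarrow> play n m s h ! k = bid_profile n s (take k (play n m s h)))"
proof (induction n m s h rule: play.induct)
  case (1 n m s h)
  show ?case
  proof (cases "length h < m")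
    case False
    then show ?thesis using "1.prems" play_complete[of m h n s] by auto
  next
    case True
    define h' where "h' = h @ [bid_profile n s h]"
    let ?H = "play n m s h'"
    have IH: "length ?H = m \<and> take (Suc (length h)) ?H = h' \<and>
        (\<forall>k. Suc (length h) \<le> k \<and> k < m \<longrightarrow> ?H ! k = bid_profile n s (take k ?H))"
      using "1.IH"[OF True] True unfolding h'_def bid_profile_def by simp
    have t1: "take (Suc (length h)) ?H = h'" using IH by simp
    have "take (length h) ?H = take (length h) (take (Suc (length h)) ?H)" by simp
    also have "\<dots> = h" using t1 by (simp add: h'_def)
    finally have t0: "take (length h) ?H = h" .
    have "?H ! length h = take (Suc (length h)) ?H ! length h" by simp
    also have "\<dots> = bid_profile n s h" using t1 by (simp add: h'_def nth_append)
    finally have nth0: "?H ! length h = bid_profile n s h" .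
    show ?thesis unfolding play_step[OF True] h'_def[symmetric]
    proof (intro conjI allI impI)
      show "length ?H = m" using IH by simp
      show "take (length h) ?H = h" by (rule t0)
    next
      fix k assume k: "length h \<le> k \<and> k < m"
      show "?H ! k = bid_profile n s (take k ?H)"
        using IH k nth0 t0 by (cases "k = length h") auto
    qed
  qed
qed

lemma length_play [simp]: "length h \<le> m \<Longrightarrow> length (play n m s h) = m"
  using play_extends by blast

lemma take_play [simp]: "length h \<le> m \<Longrightarrow> take (length h) (play n m s h) = h"
  using play_extends by blast

lemma nth_play:
  "length h \<le> k \<Longrightarrow> k < m \<Longrightarrow> play n m s h ! k = bid_profile n s (take k (play n m s h))"
  using play_extends[of h m n s] by simp

definition payment :: "(hist \<Rightarrow> profile \<Rightarrow> nat) \<Rightarrow> hist \<Rightarrow> nat \<Rightarrow> real" where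
  "payment \<tau> H i = (\<Sum>k\<in>won \<tau> H i. (H ! k) i)"

lemma utility_eq_payment:
  "utility v \<sigma> \<tau> i H = bval v i ((\<lambda>k. \<sigma> ! k) ` won \<tau> H i) - payment \<tau> H i"
  by (simp add: utility_def payment_def)

lemma won_subset: "won \<tau> H i \<subseteq> {..<length H}"
  by (auto simp: won_def)

lemma finite_won [simp]: "finite (won \<tau> H i)"
  by (rule finite_subset[OF won_subset]) simp

lemma won_Nil [simp]: "won \<tau> [] i = {}"
  by (simp add: won_def)

lemma payment_empty: "won \<tau> H i = {} \<Longrightarrow> payment \<tau> H i = 0"
  by (simp add: payment_def)

lemma won_snoc: "won \<tau> (g @ [b]) i = won \<tau> g i \<union> (if \<tau> g b = i then {length g} else {})"
  by (auto simp: won_def nth_append less_Suc_eq)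

lemma payment_snoc: "payment \<tau> (g @ [b]) i = payment \<tau> g i + (if \<tau> g b = i then b i else 0)"
proof -
  have "length g \<notin> won \<tau> g i" by (auto simp: won_def)
  moreover have "(\<Sum>k\<in>won \<tau> g i. ((g @ [b]) ! k) i) = (\<Sum>k\<in>won \<tau> g i. (g ! k) i)"
    by (rule sum.cong) (auto simp: won_def nth_append)
  ultimately show ?thesis unfolding payment_def won_snoc by (auto simp: sum.insert_if)
qed

lemma revenue_snoc: "revenue \<tau> (g @ [b]) = revenue \<tau> g + b (\<tau> g b)"
  by (simp add: revenue_def nth_append)

lemma prefix_take_nth:
  assumes "take (length g) G = g" "k < length g"
  shows "take k G = take k g" "G ! k = g ! k"
proof -
  have "take k G = take k (take (length g) G)" using assms(2) by simp
  then show "take k G = take k g" using assms(1) by simp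
  have "G ! k = take (length g) G ! k" using assms(2) by simp
  then show "G ! k = g ! k" using assms(1) by simp
qed

lemma won_prefix:
  assumes "take (length g) G = g"
  shows "won \<tau> G i \<inter> {..<length g} = won \<tau> g i"
proof (rule set_eqI)
  fix k
  have "length (take (length g) G) = length g" using assms by simp
  then have "length g \<le> length G" by simp
  then show "k \<in> won \<tau> G i \<inter> {..<length g} \<longleftrightarrow> k \<in> won \<tau> g i"
    using prefix_take_nth[OF assms, of k] by (cases "k < length g") (simp_all add: won_def)
qed

lemma won_take: "k \<le> length G \<Longrightarrow> won \<tau> (take k G) i = won \<tau> G i \<inter> {..<k}"
  using won_prefix[of "take k G" G] by simp

lemma won_take_Suc:
  "k < length G \<Longrightarrow> won \<tau> (take (Suc k) G) i =
     won \<tau> (take k G) i \<union> (if \<tau> (take k G) (G ! k) = i then {k} else {})"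
  by (simp add: take_Suc_conv_app_nth won_snoc)

lemma payment_prefix_split:
  assumes "take (length g) G = g"
  shows "payment \<tau> G i = payment \<tau> g i + (\<Sum>k\<in>{k\<in>won \<tau> G i. length g \<le> k}. (G ! k) i)"
proof -
  let ?L = "{k\<in>won \<tau> G i. length g \<le> k}"
  have split: "won \<tau> G i = (won \<tau> G i \<inter> {..<length g}) \<union> ?L" by auto
  have "payment \<tau> G i = (\<Sum>k\<in>won \<tau> G i \<inter> {..<length g}. (G ! k) i) + (\<Sum>k\<in>?L. (G ! k) i)"
    unfolding payment_def by (subst split, rule sum.union_disjoint) auto
  also have "(\<Sum>k\<in>won \<tau> G i \<inter> {..<length g}. (G ! k) i) = payment \<tau> g i"
    unfolding payment_def won_prefix[OF assms]
    by (rule sum.cong) (auto simp: won_def prefix_take_nth[OF assms])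
  finally show ?thesis .
qed

lemma payment_prefix_le:
  assumes prefix: "take (length g) G = g"
    and nonneg: "\<And>k. length g \<le> k \<Longrightarrow> k < length G \<Longrightarrow> 0 \<le> (G ! k) i"
  shows "payment \<tau> g i \<le> payment \<tau> G i"
    and "k \<in> won \<tau> G i \<Longrightarrow> length g \<le> k \<Longrightarrow> payment \<tau> g i + (G ! k) i \<le> payment \<tau> G i"
proof -
  let ?L = "{k\<in>won \<tau> G i. length g \<le> k}"
  have L_nonneg: "0 \<le> (G ! k) i" if "k \<in> ?L" for k
    using that nonneg won_subset by fastforce
  then have "0 \<le> (\<Sum>k\<in>?L. (G ! k) i)" by (rule sum_nonneg)
  then show "payment \<tau> g i \<le> payment \<tau> G i" using payment_prefix_split[OF prefix] by simp
  assume "k \<in> won \<tau> G i" "length g \<le> k"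
  then have "(G ! k) i \<le> (\<Sum>k\<in>?L. (G ! k) i)"
    by (intro member_le_sum) (use L_nonneg in auto)
  then show "payment \<tau> g i + (G ! k) i \<le> payment \<tau> G i"
    using payment_prefix_split[OF prefix] by simp
qed

lemma payment_prefix_eq:
  assumes "take (length g) G = g"
    and "\<And>k. length g \<le> k \<Longrightarrow> k < length G \<Longrightarrow> (G ! k) i = 0"
  shows "payment \<tau> G i = payment \<tau> g i"
proof -
  have "(\<Sum>k\<in>{k\<in>won \<tau> G i. length g \<le> k}. (G ! k) i) = 0"
    by (rule sum.neutral) (use assms(2) won_subset in fastforce)
  then show ?thesis using payment_prefix_split[OF assms(1)] by simp
qed

lemma won_prefix_subset:
  "take (length g) G = g \<Longrightarrow> length g \<le> k \<Longrightarrow> k \<le> length G \<Longrightarrow> won \<tau> g i \<subseteq> won \<tau> (take k G) i"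
proof -
  assume prefix: "take (length g) G = g" and k: "length g \<le> k" "k \<le> length G"
  have "won \<tau> g i = won \<tau> G i \<inter> {..<length g}" using won_prefix[OF prefix] by simp
  also have "\<dots> \<subseteq> won \<tau> G i \<inter> {..<k}" using k by auto
  also have "\<dots> = won \<tau> (take k G) i" using won_take[OF k(2)] by simp
  finally show ?thesis .
qed

lemma nth_play_upd:
  assumes "length h \<le> k" "k < m"
  shows "i < n \<Longrightarrow> (play n m (s(i := s')) h ! k) i = s' (take k (play n m (s(i := s')) h))"
    and "j \<noteq> i \<Longrightarrow>
      (play n m (s(i := s')) h ! k) j = bid_profile n s (take k (play n m (s(i := s')) h)) j"
  using nth_play[OF assms, of n "s(i := s')"] by (simp_all add: bid_profile_def)

lemma tie_rule_raised_bid_wins: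
  assumes "tie_rule n \<tau>" "i < n" "\<And>j. j < n \<Longrightarrow> b j \<le> c" "c < p"
  shows "\<tau> h (b(i := p)) = i"
proof (rule ccontr)
  let ?t = "\<tau> h (b(i := p))"
  assume ne: "?t \<noteq> i"
  have t: "?t < n" "\<forall>j<n. (b(i := p)) j \<le> (b(i := p)) ?t"
    using assms(1) unfolding tie_rule_def by blast+
  then have "p \<le> b ?t" using t(2)[rule_format, OF assms(2)] ne by simp
  then show False using assms(3)[OF t(1)] assms(4) by simp
qed

definition bid_once :: "hist \<Rightarrow> real \<Rightarrow> hist \<Rightarrow> real" where
  "bid_once h p = (\<lambda>g. if g = h then p else 0)"

lemma play_bid_once:
  assumes "length h < m" "i < n" "\<tau> h ((bid_profile n s h)(i := p)) = i"
  shows "payment \<tau> (play n m (s(i := bid_once h p)) h) i = payment \<tau> h i + p"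
    and "length h \<in> won \<tau> (play n m (s(i := bid_once h p)) h) i"
proof -
  define H where "H = play n m (s(i := bid_once h p)) h"
  define b where "b = (bid_profile n s h)(i := p)"
  have "bid_profile n (s(i := bid_once h p)) h = b"
    using assms(2) by (simp add: bid_profile_upd b_def bid_once_def)
  then have H: "H = play n m (s(i := bid_once h p)) (h @ [b])"
    using play_step[OF assms(1)] H_def by simp
  have prefix: "take (Suc (length h)) H = h @ [b]"
    using take_play[of "h @ [b]" m] assms(1) unfolding H by simp
  have silent: "(H ! k) i = 0" if "Suc (length h) \<le> k" "k < length H" for k
  proof -
    have "length (take k H) \<noteq> length h" using that by simp
    then have "take k H \<noteq> h" by blast
    then show ?thesis
      using nth_play_upd(1)[of "h @ [b]" k m] that assms(1,2) unfolding H
      by (auto simp: bid_once_def)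
  qed
  have "payment \<tau> H i = payment \<tau> (h @ [b]) i"
    by (rule payment_prefix_eq) (use prefix silent in simp_all)
  then show "payment \<tau> (play n m (s(i := bid_once h p)) h) i = payment \<tau> h i + p"
    using assms(3) by (simp add: payment_snoc b_def H_def)
  have "length h \<in> won \<tau> (h @ [b]) i" using assms(3) by (simp add: won_snoc b_def)
  then show "length h \<in> won \<tau> (play n m (s(i := bid_once h p)) h) i"
    using won_prefix[of "h @ [b]" H \<tau> i] prefix H_def by auto
qed

lemma payment_play_silent:
  assumes "length h \<le> m" "i < n"
  shows "payment \<tau> (play n m (s(i := (\<lambda>_. 0))) h) i = payment \<tau> h i"
  by (rule payment_prefix_eq) (use assms nth_play_upd(1) in auto)

lemma payment_play_mono:
  assumes "length h \<le> m" "i < n" "\<And>g. 0 \<le> s i g"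
  shows "payment \<tau> h i \<le> payment \<tau> (play n m s h) i"
  by (rule payment_prefix_le(1)) (use assms nth_play in \<open>auto simp: bid_profile_def\<close>)

section \<open>The market\<close>

definition premium :: "nat \<Rightarrow> real" where
  "premium m = 1 / (real m + 1)^2"

definition item_value :: "nat \<Rightarrow> nat \<Rightarrow> real" where
  "item_value m j = (if j = 0 then 1 else 1 + premium m)"

definition market :: "nat \<Rightarrow> nat \<Rightarrow> nat \<Rightarrow> real" where
  "market m i j = (if i = 0 then 1 else if i = Suc j then item_value m j else 0)"

lemma premium_pos: "0 < premium m"
  by (simp add: premium_def)

lemma item_value_ge_1: "1 \<le> item_value m j"
  using premium_pos[of m] by (simp add: item_value_def)

lemma item_value_gt_1: "j \<noteq> 0 \<Longrightarrow> 1 < item_value m j"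
  using premium_pos[of m] by (simp add: item_value_def)

lemma market_nonneg: "0 \<le> market m i j"
  using item_value_ge_1[of m j] by (simp add: market_def)

lemma market_le: "market m i j \<le> 1 + premium m"
  using premium_pos[of m] by (simp add: market_def item_value_def)

lemma bval_market_0: "bval (market m) 0 S = (if S = {} then 0 else 1)"
proof (cases "S = {}")
  case False
  then have "market m 0 ` S = {1}" by (auto simp: market_def)
  then show ?thesis using False by (simp add: bval_def)
qed (simp add: bval_def)

lemma bval_market_pos:
  assumes "0 < i"
  shows "bval (market m) i S = (if i - 1 \<in> S then item_value m (i - 1) else 0)"
proof (cases "S = {}")
  case True then show ?thesis by (simp add: bval_def)
next
  case False
  have sub: "market m i ` S \<subseteq> {0, item_value m (i - 1)}" using assms by (auto simp: market_def)
  then have fin: "finite (market m i ` S)" by (rule finite_subset) simp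
  show ?thesis
  proof (cases "i - 1 \<in> S")
    case True
    moreover have "market m i (i - 1) = item_value m (i - 1)" using assms by (simp add: market_def)
    ultimately have mem: "item_value m (i - 1) \<in> market m i ` S" by (metis image_eqI)
    have "Max (market m i ` S) = item_value m (i - 1)"
      by (rule Max_eqI[OF fin]) (use sub mem item_value_ge_1[of m "i - 1"] in auto)
    then show ?thesis using True False by (simp add: bval_def)
  next
    case nm: False
    have "market m i ` S = {0}" using False nm assms by (auto simp: market_def)
    then show ?thesis using nm False by (simp add: bval_def)
  qed
qed

lemma bval_market_nonneg: "0 \<le> bval (market m) i S"
  by (cases "i = 0") (auto simp: bval_market_0 bval_market_pos item_value_def premium_def)

lemma bval_market_0_le_1: "bval (market m) 0 S \<le> 1"
  by (simp add: bval_market_0)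

lemma bval_market_le_item_value: "0 < i \<Longrightarrow> bval (market m) i S \<le> item_value m (i - 1)"
  using item_value_ge_1[of m "i - 1"] by (auto simp: bval_market_pos)

lemma bval_market_mono:
  "0 < i \<Longrightarrow> (i - 1 \<in> S' \<Longrightarrow> i - 1 \<in> S) \<Longrightarrow> bval (market m) i S' \<le> bval (market m) i S"
  using item_value_ge_1[of m "i - 1"] by (auto simp: bval_market_pos)

lemma bval_le_sum:
  assumes "finite S" "\<And>j. j \<in> S \<Longrightarrow> 0 \<le> v i j"
  shows "bval v i S \<le> (\<Sum>j\<in>S. v i j)"
proof (cases "S = {}")
  case False
  have "v i j \<le> (\<Sum>j\<in>S. v i j)" if "j \<in> S" for j
    using that assms by (intro member_le_sum) auto
  then have "Max (v i ` S) \<le> (\<Sum>j\<in>S. v i j)"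
    using assms(1) False by (subst Max_le_iff) auto
  then show ?thesis using False by (simp add: bval_def)
qed (simp add: bval_def)

lemma welfare_le_bound:
  assumes a: "a \<in> {..<m} \<rightarrow>\<^sub>E {..<n}"
    and v: "\<And>i j. i < n \<Longrightarrow> j < m \<Longrightarrow> 0 \<le> v i j \<and> v i j \<le> c"
  shows "welfare v n m a \<le> real m * c"
proof -
  have "welfare v n m a \<le> (\<Sum>i<n. \<Sum>j\<in>{j. j < m \<and> a j = i}. v i j)"
    unfolding welfare_def by (intro sum_mono bval_le_sum) (use v in auto)
  also have "\<dots> = (\<Sum>i<n. \<Sum>j\<in>{j. j \<in> {..<m} \<and> a j = i}. v (a j) j)"
    by (auto intro!: sum.cong)
  also have "\<dots> = (\<Sum>j<m. v (a j) j)"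
    by (rule sum.group) (use a in auto)
  also have "\<dots> \<le> (\<Sum>j<m. c)"
    by (rule sum_mono) (use a v in blast)
  finally show ?thesis by simp
qed

lemma welfare_market_diagonal:
  fixes m :: nat
  defines "a \<equiv> (\<lambda>j. if j < m then Suc j else undefined)"
  shows "a \<in> {..<m} \<rightarrow>\<^sub>E {..<m + 1}" and "real m \<le> welfare (market m) (m + 1) m a"
proof -
  show "a \<in> {..<m} \<rightarrow>\<^sub>E {..<m + 1}" unfolding a_def by (rule PiE_I) auto
  define g :: "nat \<Rightarrow> real" where "g i = (if i = 0 then 0 else 1)" for i
  have "(\<Sum>i<Suc m. g i) = g 0 + (\<Sum>i<m. g (Suc i))" by (rule sum.lessThan_Suc_shift)
  then have "real m = (\<Sum>i<m + 1. g i)" by (simp add: g_def)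
  also have "\<dots> \<le> welfare (market m) (m + 1) m a"
    unfolding welfare_def
  proof (rule sum_mono)
    fix i assume i: "i \<in> {..<m + 1}"
    show "g i \<le> bval (market m) i {j. j < m \<and> a j = i}"
    proof (cases "i = 0")
      case True then show ?thesis using bval_market_nonneg by (simp add: g_def)
    next
      case False
      then have "i - 1 \<in> {j. j < m \<and> a j = i}" using i by (auto simp: a_def)
      then show ?thesis
        using False bval_market_pos[of i m] item_value_ge_1[of m "i - 1"] by (simp add: g_def)
    qed
  qed
  finally show "real m \<le> welfare (market m) (m + 1) m a" .
qed

lemma opt_welfare_market_bounds:
  "real m \<le> opt_welfare (market m) (m + 1) m \<and>
   opt_welfare (market m) (m + 1) m \<le> real m * (1 + premium m)"
proof -
  let ?A = "{..<m} \<rightarrow>\<^sub>E {..<m + 1}"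
  let ?W = "welfare (market m) (m + 1) m ` ?A"
  obtain a where a: "a \<in> ?A" "real m \<le> welfare (market m) (m + 1) m a"
    using welfare_market_diagonal[of m] by (rule that)
  have fin: "finite ?W" by (simp add: finite_PiE)
  have "welfare (market m) (m + 1) m a \<le> Max ?W" using fin a(1) by (intro Max_ge) auto
  then have "real m \<le> Max ?W" using a(2) by linarith
  moreover have "welfare (market m) (m + 1) m a' \<le> real m * (1 + premium m)" if "a' \<in> ?A" for a'
    by (rule welfare_le_bound[OF that]) (simp add: market_nonneg market_le)
  then have "Max ?W \<le> real m * (1 + premium m)" using fin a(1) by (subst Max_le_iff) auto
  ultimately show ?thesis unfolding opt_welfare_def by simp
qed

lemma opt_welfare_market_asymptotic:
  "(\<lambda>m. opt_welfare (market m) (m + 1) m - real m) \<longlonglongrightarrow> 0"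
proof (rule tendsto_sandwich[of "\<lambda>_. 0" _ _ "\<lambda>m. inverse (real (Suc m))"])
  have premium_bound: "real m * premium m \<le> inverse (real (Suc m))" for m
  proof -
    have "real m * premium m = real m / (real m + 1)^2" by (simp add: premium_def)
    also have "\<dots> \<le> (real m + 1) / (real m + 1)^2" by (rule divide_right_mono) auto
    also have "\<dots> = inverse (real (Suc m))"
    proof -
      have "real m + 1 \<noteq> 0" by simp
      then have "(real m + 1) / (real m + 1)^2 = inverse (real m + 1)"
        by (simp add: power2_eq_square divide_inverse)
      then show ?thesis by simp
    qed
    finally show ?thesis .
  qed
  have bounds: "0 \<le> opt_welfare (market m) (m + 1) m - real m \<and>
      opt_welfare (market m) (m + 1) m - real m \<le> inverse (real (Suc m))" for m
  proof -
    have "real m * (1 + premium m) = real m + real m * premium m" by (simp add: distrib_left)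
    then show ?thesis using opt_welfare_market_bounds[of m] premium_bound[of m]
      by linarith
  qed
  show "\<forall>\<^sub>F m in sequentially. 0 \<le> opt_welfare (market m) (m + 1) m - real m"
    by (intro always_eventually allI) (rule conjunct1[OF bounds])
  show "\<forall>\<^sub>F m in sequentially. opt_welfare (market m) (m + 1) m - real m \<le> inverse (real (Suc m))"
    by (intro always_eventually allI) (rule conjunct2[OF bounds])
  show "(\<lambda>_. 0 :: real) \<longlonglongrightarrow> 0" by simp
  show "(\<lambda>m. inverse (real (Suc m))) \<longlonglongrightarrow> 0" by (rule LIMSEQ_inverse_real_of_nat)
qed

section \<open>Selling item 0 last: revenue at least \<open>m\<close>\<close>

lemma valid_hist_snoc_bid_profile:
  assumes "strategy_profile n s" "valid_hist n m h" "length h < m"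
  shows "valid_hist n m (h @ [bid_profile n s h])"
  using assms by (auto simp: valid_hist_def strategy_profile_def bid_profile_def)

lemma order_nth_in_bundle_iff:
  assumes "is_order m \<sigma>" "k < m" "length H = m"
  shows "\<sigma> ! k \<in> (\<lambda>k. \<sigma> ! k) ` won \<tau> H i \<longleftrightarrow> k \<in> won \<tau> H i"
proof
  assume "\<sigma> ! k \<in> (\<lambda>k. \<sigma> ! k) ` won \<tau> H i"
  then obtain k' where k': "k' \<in> won \<tau> H i" "\<sigma> ! k = \<sigma> ! k'" by auto
  have "distinct \<sigma>" "length \<sigma> = m"
    using assms(1) distinct_card[of \<sigma>] by (auto simp: is_order_def)
  moreover have "k' < m" using k'(1) won_subset assms(3) by fastforce
  ultimately show "k \<in> won \<tau> H i" using k' assms(2) nth_eq_iff_index_eq by metis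
qed auto

definition order_zero_last :: "nat \<Rightarrow> nat list" where
  "order_zero_last m = [1..<m] @ [0]"

lemma is_order_zero_last: "1 \<le> m \<Longrightarrow> is_order m (order_zero_last m)"
  by (auto simp: is_order_def order_zero_last_def)

lemma order_zero_last_nth:
  "1 \<le> m \<Longrightarrow> k < m \<Longrightarrow> order_zero_last m ! k = (if k < m - 1 then Suc k else 0)"
  by (auto simp: order_zero_last_def nth_append)

context
  fixes m :: nat and \<tau> :: "hist \<Rightarrow> profile \<Rightarrow> nat" and s :: "nat \<Rightarrow> hist \<Rightarrow> real"
  assumes m_pos: "1 \<le> m" and tie: "tie_rule (m + 1) \<tau>"
    and spe: "is_SPE (m + 1) m (market m) (order_zero_last m) \<tau> s"
begin

lemma spe_strategy_profile: "strategy_profile (m + 1) s"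
  using spe by (simp add: is_SPE_def)

lemma spe_bid_nonneg: "i < m + 1 \<Longrightarrow> 0 \<le> s i g"
  using spe_strategy_profile by (simp add: strategy_profile_def)

lemma spe_no_profitable_deviation:
  "valid_hist (m + 1) m h \<Longrightarrow> length h < m \<Longrightarrow> i < m + 1 \<Longrightarrow> (\<And>g. 0 \<le> s' g) \<Longrightarrow>
   utility (market m) (order_zero_last m) \<tau> i (play (m + 1) m (s(i := s')) h)
     \<le> utility (market m) (order_zero_last m) \<tau> i (play (m + 1) m s h)"
  using spe unfolding is_SPE_def by blast

lemma stage_winner_bid_max:
  "j < m + 1 \<Longrightarrow> b j \<le> b (\<tau> h b)"
  using tie by (simp add: tie_rule_def)

lemma stage_winner_less: "\<tau> h b < m + 1"
  using tie by (simp add: tie_rule_def)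

lemma other_winner_bid_ge_1:
  assumes h: "valid_hist (m + 1) m h" "length h < m" "won \<tau> h 0 = {}"
    and w: "\<tau> h (bid_profile (m + 1) s h) \<noteq> 0"
    and continuation: "utility (market m) (order_zero_last m) \<tau> 0 (play (m + 1) m s h) \<le> 0"
  shows "1 \<le> bid_profile (m + 1) s h (\<tau> h (bid_profile (m + 1) s h))"
proof (rule ccontr)
  define b where "b = bid_profile (m + 1) s h"
  define p where "p = (b (\<tau> h b) + 1) / 2"
  assume "\<not> ?thesis"
  then have p: "b (\<tau> h b) < p" "p < 1" "0 \<le> p"
    using spe_bid_nonneg[OF stage_winner_less] by (auto simp: p_def b_def bid_profile_def)
  have "\<tau> h (b(0 := p)) = 0"
    by (rule tie_rule_raised_bid_wins[of "m + 1" \<tau> 0 b "b (\<tau> h b)"])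
      (use tie stage_winner_bid_max p(1) in auto)
  then have "payment \<tau> (play (m + 1) m (s(0 := bid_once h p)) h) 0 = payment \<tau> h 0 + p"
    and "length h \<in> won \<tau> (play (m + 1) m (s(0 := bid_once h p)) h) 0"
    using play_bid_once[of h m 0 "m + 1" \<tau> s p] h(2) by (simp_all add: b_def)
  then have "utility (market m) (order_zero_last m) \<tau> 0 (play (m + 1) m (s(0 := bid_once h p)) h) = 1 - p"
    using h(3) by (auto simp: utility_eq_payment bval_market_0 payment_empty)
  moreover have "utility (market m) (order_zero_last m) \<tau> 0 (play (m + 1) m (s(0 := bid_once h p)) h)
      \<le> utility (market m) (order_zero_last m) \<tau> 0 (play (m + 1) m s h)"
    using spe_no_profitable_deviation h p(3) by (simp add: bid_once_def)
  ultimately show False using continuation p(2) by simp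
qed

lemma utility_le_when_item_lost:
  assumes h: "length h < m" and w: "\<tau> h (bid_profile (m + 1) s h) = 0"
  defines "j \<equiv> order_zero_last m ! length h"
  shows "utility (market m) (order_zero_last m) \<tau> (Suc j) (play (m + 1) m s h)
    \<le> - payment \<tau> h (Suc j)"
proof -
  define b where "b = bid_profile (m + 1) s h"
  define H where "H = play (m + 1) m s h"
  have j: "j < m" using h m_pos by (auto simp: j_def order_zero_last_nth)
  have "H = play (m + 1) m s (h @ [b])"
    using play_step[OF h, of "m + 1" s] by (simp add: H_def b_def)
  then have "take (length (h @ [b])) H = h @ [b]"
    using take_play[of "h @ [b]" m "m + 1" s] h by simp
  then have "won \<tau> H (Suc j) \<inter> {..<Suc (length h)} = won \<tau> (h @ [b]) (Suc j)"
    using won_prefix by fastforce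
  moreover have "length h \<notin> won \<tau> (h @ [b]) (Suc j)"
    using w won_subset[of \<tau> h "Suc j"] by (auto simp: won_snoc b_def)
  ultimately have "length h \<notin> won \<tau> H (Suc j)" by blast
  then have "j \<notin> (\<lambda>k. order_zero_last m ! k) ` won \<tau> H (Suc j)"
    using order_nth_in_bundle_iff[OF is_order_zero_last[OF m_pos] h] h
    by (simp add: j_def H_def)
  then show ?thesis
    using payment_play_mono[of h m "Suc j" "m + 1" s \<tau>] h j spe_bid_nonneg
    by (simp add: utility_eq_payment bval_market_pos H_def)
qed

lemma zero_winning_bid_ge_item_value:
  assumes h: "valid_hist (m + 1) m h" "length h < m"
    and w: "\<tau> h (bid_profile (m + 1) s h) = 0"
  shows "item_value m (order_zero_last m ! length h) \<le> bid_profile (m + 1) s h 0"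
proof (rule ccontr)
  define b where "b = bid_profile (m + 1) s h"
  define j where "j = order_zero_last m ! length h"
  define v where "v = item_value m j"
  define p where "p = (b 0 + v) / 2"
  define H' where "H' = play (m + 1) m (s(Suc j := bid_once h p)) h"
  have j: "j < m" using h(2) m_pos by (auto simp: j_def order_zero_last_nth)
  assume "\<not> ?thesis"
  then have p: "b 0 < p" "p < v" "0 \<le> p"
    using spe_bid_nonneg[of 0] item_value_ge_1[of m j]
    by (auto simp: p_def b_def v_def j_def bid_profile_def)
  \<comment> \<open>buyer \<open>j + 1\<close> outbids buyer 0 and gets the only item he values\<close>
  have "b i \<le> b 0" if "i < m + 1" for i
    using stage_winner_bid_max[OF that, of b h] w by (simp add: b_def)
  then have "\<tau> h (b(Suc j := p)) = Suc j"
    using tie_rule_raised_bid_wins[OF tie _ _ p(1)] j by simp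
  then have "payment \<tau> H' (Suc j) = payment \<tau> h (Suc j) + p" "length h \<in> won \<tau> H' (Suc j)"
    using play_bid_once[of h m "Suc j" "m + 1" \<tau> s p] h(2) j by (simp_all add: b_def H'_def)
  moreover have "j \<in> (\<lambda>k. order_zero_last m ! k) ` won \<tau> H' (Suc j)"
    using imageI[OF calculation(2), of "\<lambda>k. order_zero_last m ! k"] by (simp add: j_def)
  ultimately have "utility (market m) (order_zero_last m) \<tau> (Suc j) H'
      = v - (payment \<tau> h (Suc j) + p)"
    by (simp add: utility_eq_payment bval_market_pos v_def)
  moreover have "utility (market m) (order_zero_last m) \<tau> (Suc j) H'
      \<le> utility (market m) (order_zero_last m) \<tau> (Suc j) (play (m + 1) m s h)"
    using spe_no_profitable_deviation h j p(3) by (simp add: bid_once_def H'_def)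
  ultimately show False
    using utility_le_when_item_lost[OF h(2) w] p(2) by (simp add: j_def)
qed

lemma utility_zero_le_winning_bid:
  assumes h: "length h < m" "won \<tau> h 0 = {}"
    and w: "\<tau> h (bid_profile (m + 1) s h) = 0"
  shows "utility (market m) (order_zero_last m) \<tau> 0 (play (m + 1) m s h)
    \<le> 1 - bid_profile (m + 1) s h 0"
proof -
  define b where "b = bid_profile (m + 1) s h"
  have "payment \<tau> (h @ [b]) 0 = b 0" using h(2) w by (simp add: payment_snoc payment_empty b_def)
  then have pay: "b 0 \<le> payment \<tau> (play (m + 1) m s (h @ [b])) 0"
    using payment_play_mono[of "h @ [b]" m 0 "m + 1" s \<tau>] h(1) spe_bid_nonneg by simp
  have "play (m + 1) m s h = play (m + 1) m s (h @ [b])"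
    using play_step[OF h(1), of "m + 1" s] by (simp add: b_def)
  then have "utility (market m) (order_zero_last m) \<tau> 0 (play (m + 1) m s h) \<le> 1 - b 0"
    unfolding utility_eq_payment by (simp only:) (rule diff_mono[OF bval_market_0_le_1 pay])
  then show ?thesis by (simp add: b_def)
qed

lemma zero_wins_only_last_item:
  assumes h: "valid_hist (m + 1) m h" "length h < m" "won \<tau> h 0 = {}"
    and w: "\<tau> h (bid_profile (m + 1) s h) = 0"
  shows "length h = m - 1"
proof (rule ccontr)
  assume "length h \<noteq> m - 1"
  then have "order_zero_last m ! length h \<noteq> 0"
    using h(2) m_pos by (simp add: order_zero_last_nth)
  then have "1 < bid_profile (m + 1) s h 0"
    by (rule less_le_trans[OF item_value_gt_1 zero_winning_bid_ge_item_value[OF h(1,2) w]])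
  then have "utility (market m) (order_zero_last m) \<tau> 0 (play (m + 1) m s h) < 0"
    using utility_zero_le_winning_bid[OF h(2,3) w] by simp
  moreover have "payment \<tau> (play (m + 1) m (s(0 := (\<lambda>_. 0))) h) 0 = 0"
    using payment_play_silent[of h m 0 "m + 1" \<tau> s] h(2,3) by (simp add: payment_empty)
  then have "0 \<le> utility (market m) (order_zero_last m) \<tau> 0 (play (m + 1) m (s(0 := (\<lambda>_. 0))) h)"
    using bval_market_nonneg by (simp add: utility_eq_payment)
  ultimately show False
    using spe_no_profitable_deviation[OF h(1,2), of 0 "\<lambda>_. 0"] by simp
qed

lemma revenue_play_before_zero_wins:
  "valid_hist (m + 1) m h \<Longrightarrow> length h + d = m \<Longrightarrow> won \<tau> h 0 = {} \<Longrightarrow>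
    revenue \<tau> h + real d \<le> revenue \<tau> (play (m + 1) m s h) \<and>
    utility (market m) (order_zero_last m) \<tau> 0 (play (m + 1) m s h) \<le> 0"
proof (induction d arbitrary: h)
  case 0
  then show ?case by (simp add: play_complete utility_eq_payment payment_empty bval_market_0)
next
  case (Suc d)
  define b where "b = bid_profile (m + 1) s h"
  have h: "length h < m" using Suc.prems(2) by simp
  have play_h: "play (m + 1) m s h = play (m + 1) m s (h @ [b])"
    using play_step[OF h, of "m + 1" s] by (simp add: b_def)
  show ?case
  proof (cases "\<tau> h b = 0")
    case False
    have valid: "valid_hist (m + 1) m (h @ [b])"
      using valid_hist_snoc_bid_profile[OF spe_strategy_profile Suc.prems(1) h] by (simp add: b_def)
    have "won \<tau> (h @ [b]) 0 = {}" using Suc.prems(3) False by (simp add: won_snoc)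
    then have IH: "revenue \<tau> (h @ [b]) + real d \<le> revenue \<tau> (play (m + 1) m s h)"
        "utility (market m) (order_zero_last m) \<tau> 0 (play (m + 1) m s h) \<le> 0"
      using Suc.IH[OF valid] Suc.prems(2) play_h by simp_all
    then have "1 \<le> b (\<tau> h b)"
      using other_winner_bid_ge_1[OF Suc.prems(1) h Suc.prems(3)] False by (simp add: b_def)
    then show ?thesis using IH by (simp add: revenue_snoc)
  next
    case True
    have "length h = m - 1"
      using zero_wins_only_last_item[OF Suc.prems(1) h Suc.prems(3)] True by (simp add: b_def)
    moreover have "1 \<le> b 0"
      using zero_winning_bid_ge_item_value[OF Suc.prems(1) h] True
        item_value_ge_1[of m "order_zero_last m ! length h"] by (simp add: b_def)
    moreover have "utility (market m) (order_zero_last m) \<tau> 0 (play (m + 1) m s h) \<le> 1 - b 0"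
      using utility_zero_le_winning_bid[OF h Suc.prems(3)] True by (simp add: b_def)
    ultimately show ?thesis
      using Suc.prems(2) True play_h play_complete[of m "h @ [b]" "m + 1" s]
      by (simp add: revenue_snoc)
  qed
qed

lemma revenue_ge_items: "real m \<le> revenue \<tau> (play (m + 1) m s [])"
  using revenue_play_before_zero_wins[of "[]" m] by (simp add: valid_hist_def revenue_def)

end

section \<open>Selling item 0 first: an equilibrium with revenue 1\<close>

definition favoured_tie :: "nat \<Rightarrow> hist \<Rightarrow> profile \<Rightarrow> nat" where
  "favoured_tie n g b =
    (if g = [] \<and> (\<forall>j<n. b j \<le> b 0) then 0
     else if Suc (length g) < n \<and> (\<forall>j<n. b j \<le> b (Suc (length g))) then Suc (length g)
     else (SOME i. i < n \<and> (\<forall>j<n. b j \<le> b i)))"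

lemma exists_highest_bidder: "0 < (n :: nat) \<Longrightarrow> \<exists>i<n. \<forall>j<n. b j \<le> (b i :: real)"
proof -
  assume "0 < n"
  have "finite (b ` {..<n})" by simp
  then have "Max (b ` {..<n}) \<in> b ` {..<n}" using \<open>0 < n\<close> by (intro Max_in) auto
  then obtain i where "i < n" "b i = Max (b ` {..<n})" by auto
  then show ?thesis by (intro exI[of _ i]) auto
qed

lemma tie_rule_favoured_tie: "0 < n \<Longrightarrow> tie_rule n (favoured_tie n)"
proof -
  assume n: "0 < n"
  have "favoured_tie n g b < n \<and> (\<forall>j<n. b j \<le> b (favoured_tie n g b))" for g b
  proof -
    have "\<exists>i. i < n \<and> (\<forall>j<n. b j \<le> b i)" using exists_highest_bidder[OF n] by blast
    then have "(SOME i. i < n \<and> (\<forall>j<n. b j \<le> b i)) < n \<and>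
        (\<forall>j<n. b j \<le> b (SOME i. i < n \<and> (\<forall>j<n. b j \<le> b i)))"
      by (rule someI_ex)
    then show ?thesis using n unfolding favoured_tie_def by auto
  qed
  then show ?thesis unfolding tie_rule_def by blast
qed

lemma favoured_tie_Nil: "\<forall>j<n. b j \<le> b 0 \<Longrightarrow> favoured_tie n [] b = 0"
  by (simp add: favoured_tie_def)

lemma favoured_tie_Suc:
  "g \<noteq> [] \<Longrightarrow> Suc (length g) < n \<Longrightarrow> \<forall>j<n. b j \<le> b (Suc (length g)) \<Longrightarrow>
    favoured_tie n g b = Suc (length g)"
  by (simp add: favoured_tie_def)

lemma favoured_tie_ne_zero:
  assumes "g \<noteq> []" "Suc (length g) < n" "b 0 \<le> b (Suc (length g))"
  shows "favoured_tie n g b \<noteq> 0"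
proof
  assume zero: "favoured_tie n g b = 0"
  have "\<forall>j<n. b j \<le> b (favoured_tie n g b)"
    using tie_rule_favoured_tie[of n] assms(2) by (simp add: tie_rule_def)
  then have "\<forall>j<n. b j \<le> b (Suc (length g))" using zero assms(3) by (metis order_trans)
  then show False using favoured_tie_Suc[OF assms(1,2)] zero by simp
qed

lemma favoured_tie_zero_stays_empty:
  assumes "1 \<le> k" "k \<le> K" "K \<le> length G" "K < n"
    and "won (favoured_tie n) (take k G) 0 = {}"
    and "\<And>k'. k \<le> k' \<Longrightarrow> k' < K \<Longrightarrow> won (favoured_tie n) (take k' G) 0 = {} \<Longrightarrow>
      (G ! k') 0 \<le> (G ! k') (Suc k')"
  shows "won (favoured_tie n) (take K G) 0 = {}"
  using assms(2-4)
proof (induction K rule: dec_induct)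
  case base
  then show ?case using assms(5) by simp
next
  case (step j)
  then have empty: "won (favoured_tie n) (take j G) 0 = {}" by simp
  have "take j G \<noteq> []" using assms(1) step(1,4) by auto
  then have "favoured_tie n (take j G) (G ! j) \<noteq> 0"
    using favoured_tie_ne_zero[of "take j G" n "G ! j"] assms(1) assms(6)[OF step(1,2) empty] step(1,4,5)
    by simp
  then show ?case using won_take_Suc[of j G "favoured_tie n" 0] step(4) empty by simp
qed

definition low_revenue_bids :: "nat \<Rightarrow> nat \<Rightarrow> hist \<Rightarrow> real" where
  "low_revenue_bids m i g =
    (if won (favoured_tie (m + 1)) g 0 = {} \<and> (i = 0 \<or> i = Suc (length g)) then 1 else 0)"

definition order_zero_first :: "nat \<Rightarrow> nat list" where
  "order_zero_first m = [0..<m]"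

lemma is_order_zero_first: "is_order m (order_zero_first m)"
  by (auto simp: is_order_def order_zero_first_def)

lemma utility_order_zero_first:
  "length H = m \<Longrightarrow> utility v (order_zero_first m) \<tau> i H = bval v i (won \<tau> H i) - payment \<tau> H i"
proof -
  assume "length H = m"
  then have "(\<lambda>k. order_zero_first m ! k) ` won \<tau> H i = won \<tau> H i"
    using won_subset[of \<tau> H i] by (force simp: order_zero_first_def)
  then show ?thesis by (simp add: utility_eq_payment)
qed

context
  fixes m :: nat
  assumes m_pos: "1 \<le> m"
begin

lemma favoured_tie_highest: "j < m + 1 \<Longrightarrow> b j \<le> b (favoured_tie (m + 1) g b)"
  using tie_rule_favoured_tie[of "m + 1"] by (simp add: tie_rule_def)

lemma play_after_zero_won:
  assumes k: "length h \<le> k" "k < m" and won: "won (favoured_tie (m + 1)) h 0 \<noteq> {}"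
  defines "G \<equiv> play (m + 1) m (low_revenue_bids m) h"
  shows "G ! k = (\<lambda>_. 0)" and "favoured_tie (m + 1) (take k G) (G ! k) = Suc k"
proof -
  have "won (favoured_tie (m + 1)) h 0 \<subseteq> won (favoured_tie (m + 1)) (take k G) 0"
    using won_prefix_subset k by (simp add: G_def)
  then have "won (favoured_tie (m + 1)) (take k G) 0 \<noteq> {}" using won by blast
  then show zero: "G ! k = (\<lambda>_. 0)"
    using nth_play[OF k] by (auto simp: G_def bid_profile_def low_revenue_bids_def fun_eq_iff)
  have "h \<noteq> []" using won by auto
  moreover have "length (take k G) = k" using k by (simp add: G_def)
  ultimately have "take k G \<noteq> []" using k(1) by (cases h) auto
  then show "favoured_tie (m + 1) (take k G) (G ! k) = Suc k"
    using favoured_tie_Suc[of "take k G" "m + 1" "G ! k"] zero k by (simp add: G_def)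
qed

lemma play_before_zero_won:
  assumes h: "h \<noteq> []" "length h \<le> m" and not_won: "won (favoured_tie (m + 1)) h 0 = {}"
  defines "G \<equiv> play (m + 1) m (low_revenue_bids m) h"
  shows "length h \<le> k \<Longrightarrow> k \<le> m \<Longrightarrow> won (favoured_tie (m + 1)) (take k G) 0 = {}"
    and "length h \<le> k \<Longrightarrow> k < m \<Longrightarrow> G ! k = (\<lambda>j. if j = 0 \<or> j = Suc k then 1 else 0)"
    and "length h \<le> k \<Longrightarrow> k < m \<Longrightarrow> favoured_tie (m + 1) (take k G) (G ! k) = Suc k"
proof -
  have bids: "G ! k = (\<lambda>j. if j = 0 \<or> j = Suc k then 1 else 0)"
    if "length h \<le> k" "k < m" "won (favoured_tie (m + 1)) (take k G) 0 = {}" for k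
    using nth_play[OF that(1,2)] that by (auto simp: G_def bid_profile_def low_revenue_bids_def)
  have "1 \<le> length h" using h(1) by (cases h) auto
  then show empty: "won (favoured_tie (m + 1)) (take k G) 0 = {}" if "length h \<le> k" "k \<le> m" for k
    by (rule favoured_tie_zero_stays_empty[of "length h" k])
      (use h not_won that bids in \<open>auto simp: G_def\<close>)
  show "G ! k = (\<lambda>j. if j = 0 \<or> j = Suc k then 1 else 0)" if "length h \<le> k" "k < m" for k
    using bids[OF that empty] that by simp
  assume k: "length h \<le> k" "k < m"
  moreover have "length (take k G) = k" using k by (simp add: G_def)
  ultimately have "take k G \<noteq> []" using h by (cases h) auto
  then show "favoured_tie (m + 1) (take k G) (G ! k) = Suc k"
    using bids[OF k empty] favoured_tie_Suc[of "take k G" "m + 1" "G ! k"] k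
    by (simp add: G_def)
qed

lemma play_from_start:
  defines "G \<equiv> play (m + 1) m (low_revenue_bids m) []"
  shows "G ! 0 = (\<lambda>j. if j = 0 \<or> j = 1 then 1 else 0)"
    and "favoured_tie (m + 1) [] (G ! 0) = 0"
    and "1 \<le> k \<Longrightarrow> k < m \<Longrightarrow> G ! k = (\<lambda>_. 0)"
    and "1 \<le> k \<Longrightarrow> k < m \<Longrightarrow> favoured_tie (m + 1) (take k G) (G ! k) = Suc k"
proof -
  define b where "b = bid_profile (m + 1) (low_revenue_bids m) []"
  have b: "b = (\<lambda>j. if j = 0 \<or> j = 1 then 1 else 0)"
    using m_pos by (auto simp: b_def bid_profile_def low_revenue_bids_def)
  have G: "G = play (m + 1) m (low_revenue_bids m) [b]"
    using play_step[of "[]" m "m + 1" "low_revenue_bids m"] m_pos by (simp add: G_def b_def)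
  have "take 1 G = [b]" using take_play[of "[b]" m] m_pos unfolding G by simp
  moreover have "G ! 0 = take 1 G ! 0" by simp
  ultimately show b0: "G ! 0 = (\<lambda>j. if j = 0 \<or> j = 1 then 1 else 0)" using b by simp
  show t0: "favoured_tie (m + 1) [] (G ! 0) = 0"
    using b0 by (intro favoured_tie_Nil) simp
  have "won (favoured_tie (m + 1)) [b] 0 \<noteq> {}"
    using t0 b0 b by (simp add: won_snoc[of _ "[]", simplified])
  then show "1 \<le> k \<Longrightarrow> k < m \<Longrightarrow> G ! k = (\<lambda>_. 0)"
    and "1 \<le> k \<Longrightarrow> k < m \<Longrightarrow> favoured_tie (m + 1) (take k G) (G ! k) = Suc k"
    using play_after_zero_won[of "[b]" k] unfolding G by simp_all
qed

lemma no_profitable_deviation_after_zero_won: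
  assumes h: "length h < m" "won (favoured_tie (m + 1)) h 0 \<noteq> {}"
    and i: "i < m + 1" and nonneg: "\<And>g. 0 \<le> s' g"
  shows "utility (market m) (order_zero_first m) (favoured_tie (m + 1)) i
      (play (m + 1) m ((low_revenue_bids m)(i := s')) h)
    \<le> utility (market m) (order_zero_first m) (favoured_tie (m + 1)) i
      (play (m + 1) m (low_revenue_bids m) h)"
proof -
  define H where "H = play (m + 1) m (low_revenue_bids m) h"
  define H' where "H' = play (m + 1) m ((low_revenue_bids m)(i := s')) h"
  have len: "length H = m" "length H' = m" and prefix: "take (length h) H = h" "take (length h) H' = h"
    using h(1) by (simp_all add: H_def H'_def)
  have "payment (favoured_tie (m + 1)) H i = payment (favoured_tie (m + 1)) h i"
    by (rule payment_prefix_eq[OF prefix(1)]) (use len play_after_zero_won(1) h in \<open>simp add: H_def\<close>)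
  moreover have "payment (favoured_tie (m + 1)) h i \<le> payment (favoured_tie (m + 1)) H' i"
    by (rule payment_prefix_le(1)[OF prefix(2)])
      (use len nth_play_upd(1) i nonneg in \<open>simp add: H'_def\<close>)
  moreover have "bval (market m) i (won (favoured_tie (m + 1)) H' i)
      \<le> bval (market m) i (won (favoured_tie (m + 1)) H i)"
  proof (cases "i = 0")
    case True
    have "won (favoured_tie (m + 1)) h 0 \<subseteq> won (favoured_tie (m + 1)) H 0"
      using won_prefix[OF prefix(1)] by blast
    then show ?thesis using True h(2) by (auto simp: bval_market_0)
  next
    case False
    show ?thesis
    proof (rule bval_market_mono)
      show "0 < i" using False by simp
      assume won': "i - 1 \<in> won (favoured_tie (m + 1)) H' i"
      show "i - 1 \<in> won (favoured_tie (m + 1)) H i"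
      proof (cases "i - 1 < length h")
        case True
        then show ?thesis using won' won_prefix[OF prefix(1)] won_prefix[OF prefix(2)] by blast
      next
        case False
        then have "favoured_tie (m + 1) (take (i - 1) H) (H ! (i - 1)) = i"
          using play_after_zero_won(2)[of h "i - 1"] h i \<open>i \<noteq> 0\<close> by (simp add: H_def)
        then show ?thesis using len i \<open>i \<noteq> 0\<close> by (simp add: won_def)
      qed
    qed
  qed
  ultimately have "utility (market m) (order_zero_first m) (favoured_tie (m + 1)) i H'
      \<le> utility (market m) (order_zero_first m) (favoured_tie (m + 1)) i H"
    using len by (simp add: utility_order_zero_first)
  then show ?thesis by (simp add: H_def H'_def)
qed

lemma zero_utility_before_won:
  assumes h: "length h < m" "won (favoured_tie (m + 1)) h 0 = {}"
  shows "utility (market m) (order_zero_first m) (favoured_tie (m + 1)) 0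
    (play (m + 1) m (low_revenue_bids m) h) = 0"
proof -
  define H where "H = play (m + 1) m (low_revenue_bids m) h"
  have len: "length H = m" and prefix: "take (length h) H = h" using h(1) by (simp_all add: H_def)
  show ?thesis
  proof (cases "h = []")
    case True
    have "k \<in> won (favoured_tie (m + 1)) H 0 \<longleftrightarrow> k = 0" for k
      using play_from_start(2) play_from_start(4)[of k] len m_pos
      by (cases "k = 0") (auto simp: won_def H_def True)
    then have "won (favoured_tie (m + 1)) H 0 = {0}" by blast
    moreover have "(H ! 0) 0 = 1" using play_from_start(1) by (simp add: H_def True)
    ultimately show ?thesis using len by (simp add: utility_order_zero_first payment_def bval_market_0 H_def)
  next
    case False
    then have "won (favoured_tie (m + 1)) (take m H) 0 = {}"
      using play_before_zero_won(1)[of h m] h by (simp add: H_def)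
    then show ?thesis
      using len by (simp add: utility_order_zero_first payment_empty bval_market_0 H_def)
  qed
qed

lemma zero_no_profitable_deviation_before_won:
  assumes h: "length h < m" "won (favoured_tie (m + 1)) h 0 = {}" and nonneg: "\<And>g. 0 \<le> s' g"
  shows "utility (market m) (order_zero_first m) (favoured_tie (m + 1)) 0
      (play (m + 1) m ((low_revenue_bids m)(0 := s')) h)
    \<le> utility (market m) (order_zero_first m) (favoured_tie (m + 1)) 0
      (play (m + 1) m (low_revenue_bids m) h)"
proof -
  define H' where "H' = play (m + 1) m ((low_revenue_bids m)(0 := s')) h"
  let ?won = "won (favoured_tie (m + 1)) H' 0"
  have len: "length H' = m" and prefix: "take (length h) H' = h" using h(1) by (simp_all add: H'_def)
  have "utility (market m) (order_zero_first m) (favoured_tie (m + 1)) 0 H' \<le> 0"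
  proof (cases "?won = {}")
    case True
    then show ?thesis using len by (simp add: utility_order_zero_first payment_empty bval_market_0)
  next
    case False
    \<comment> \<open>at the first auction buyer 0 wins, buyer \<open>k + 1\<close> still bids 1\<close>
    define k where "k = Min ?won"
    have k_won: "k \<in> ?won" and k_min: "\<And>k'. k' \<in> ?won \<Longrightarrow> k \<le> k'"
      using False by (simp_all add: k_def)
    have k: "k < m" using k_won won_subset[of "favoured_tie (m + 1)" H' 0] len by auto
    have "length h \<le> k"
      using k_won won_prefix[OF prefix, of "favoured_tie (m + 1)" 0] h(2) by (fastforce simp: not_le)
    moreover have "won (favoured_tie (m + 1)) (take k H') 0 = {}"
      using won_take[of k H' "favoured_tie (m + 1)" 0] k_min k len by (auto simp: not_less[symmetric])
    ultimately have "(H' ! k) (Suc k) = 1"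
      using nth_play_upd(2)[where i = 0 and j = "Suc k" and h = h and k = k] k
      by (simp add: H'_def bid_profile_def low_revenue_bids_def)
    moreover have "(H' ! k) (Suc k) \<le> (H' ! k) 0"
      using favoured_tie_highest[of "Suc k" "H' ! k" "take k H'"] k_won k by (simp add: won_def)
    moreover have "0 \<le> (H' ! k') 0" if "length h \<le> k'" "k' < length H'" for k'
      using nth_play_upd(1)[where i = 0 and h = h and k = k'] that nonneg len by (simp add: H'_def)
    then have "payment (favoured_tie (m + 1)) h 0 + (H' ! k) 0 \<le> payment (favoured_tie (m + 1)) H' 0"
      by (rule payment_prefix_le(2)[OF prefix _ k_won \<open>length h \<le> k\<close>])
    ultimately have "payment (favoured_tie (m + 1)) h 0 + 1 \<le> payment (favoured_tie (m + 1)) H' 0"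
      by linarith
    then show ?thesis
      using len h(2) bval_market_0_le_1[of m ?won] by (simp add: utility_order_zero_first payment_empty)
  qed
  then show ?thesis using zero_utility_before_won[OF h] by (simp add: H'_def)
qed

lemma payment_nonneg_at_start:
  assumes "i < m + 1" "\<And>g. 0 \<le> s' g"
  shows "0 \<le> payment (favoured_tie (m + 1)) (play (m + 1) m ((low_revenue_bids m)(i := s')) []) i"
proof -
  define H' where "H' = play (m + 1) m ((low_revenue_bids m)(i := s')) []"
  have "0 \<le> (H' ! k) i" if "k < length H'" for k
    using nth_play_upd(1)[where i = i and h = "[]" and k = k] that assms by (simp add: H'_def)
  then show ?thesis
    using payment_prefix_le(1)[of "[]" H' i "favoured_tie (m + 1)"] by (simp add: payment_empty H'_def)
qed

lemma no_profitable_deviation_at_start_free_item: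
  assumes i: "2 \<le> i" "i < m + 1" and nonneg: "\<And>g. 0 \<le> s' g"
  shows "utility (market m) (order_zero_first m) (favoured_tie (m + 1)) i
      (play (m + 1) m ((low_revenue_bids m)(i := s')) [])
    \<le> utility (market m) (order_zero_first m) (favoured_tie (m + 1)) i
      (play (m + 1) m (low_revenue_bids m) [])"
proof -
  define H where "H = play (m + 1) m (low_revenue_bids m) []"
  define H' where "H' = play (m + 1) m ((low_revenue_bids m)(i := s')) []"
  have len: "length H = m" "length H' = m" by (simp_all add: H_def H'_def)
  have "1 \<le> i - 1" "i - 1 < m" using i by auto
  then have "favoured_tie (m + 1) (take (i - 1) H) (H ! (i - 1)) = i"
    using play_from_start(4) i by (simp add: H_def)
  then have "i - 1 \<in> won (favoured_tie (m + 1)) H i" using i len by (simp add: won_def)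
  moreover have "(H ! k) i = 0" if "k < length H" for k
    using play_from_start(1) play_from_start(3)[of k] that len i
    by (cases "k = 0") (simp_all add: H_def)
  then have "payment (favoured_tie (m + 1)) H i = 0"
    using payment_prefix_eq[of "[]" H i "favoured_tie (m + 1)"] by (simp add: payment_empty)
  ultimately have "utility (market m) (order_zero_first m) (favoured_tie (m + 1)) i H = item_value m (i - 1)"
    using len i by (simp add: utility_order_zero_first bval_market_pos)
  moreover have "bval (market m) i (won (favoured_tie (m + 1)) H' i) \<le> item_value m (i - 1)"
    using i by (intro bval_market_le_item_value) simp
  ultimately show ?thesis
    using len payment_nonneg_at_start[of i s', OF i(2) nonneg]
    by (simp add: utility_order_zero_first H_def H'_def)
qed

lemma no_profitable_deviation_at_start_contested:
  assumes nonneg: "\<And>g. 0 \<le> s' g"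
  shows "utility (market m) (order_zero_first m) (favoured_tie (m + 1)) 1
      (play (m + 1) m ((low_revenue_bids m)(1 := s')) [])
    \<le> utility (market m) (order_zero_first m) (favoured_tie (m + 1)) 1
      (play (m + 1) m (low_revenue_bids m) [])"
proof -
  define H where "H = play (m + 1) m (low_revenue_bids m) []"
  define H' where "H' = play (m + 1) m ((low_revenue_bids m)(1 := s')) []"
  have len: "length H = m" "length H' = m" by (simp_all add: H_def H'_def)
  have "k \<notin> won (favoured_tie (m + 1)) H 1" for k
    using play_from_start(2) play_from_start(4)[of k] len
    by (cases "k = 0") (auto simp: won_def H_def)
  then have "won (favoured_tie (m + 1)) H 1 = {}" by blast
  then have on_path: "utility (market m) (order_zero_first m) (favoured_tie (m + 1)) 1 H = 0"
    using len by (simp add: utility_order_zero_first payment_empty bval_market_pos)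
  have "utility (market m) (order_zero_first m) (favoured_tie (m + 1)) 1 H' \<le> 0"
  proof (cases "0 \<in> won (favoured_tie (m + 1)) H' 1")
    case True
    \<comment> \<open>ties at the first auction favour buyer 0, who bids 1\<close>
    define b where "b = H' ! 0"
    have won0: "favoured_tie (m + 1) [] b = 1" using True by (simp add: won_def b_def)
    have "b 0 = 1"
      using nth_play_upd(2)[where i = 1 and j = 0 and h = "[]" and k = 0] m_pos
      by (simp add: b_def H'_def bid_profile_def low_revenue_bids_def)
    moreover obtain j where "j < m + 1" "b 0 < b j"
      using favoured_tie_Nil[of "m + 1" b] won0 by force
    moreover have "b j \<le> b 1" using favoured_tie_highest[OF \<open>j < m + 1\<close>, of b "[]"] won0 by simp
    ultimately have "1 < (H' ! 0) 1" by (simp add: b_def)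
    moreover have "payment (favoured_tie (m + 1)) [] 1 + (H' ! 0) 1 \<le> payment (favoured_tie (m + 1)) H' 1"
      using payment_prefix_le(2)[of "[]" H' 1 0] True
        nth_play_upd(1)[where i = 1 and h = "[]"] nonneg len by (simp add: H'_def)
    ultimately show ?thesis
      using len bval_market_le_item_value[of 1 m "won (favoured_tie (m + 1)) H' 1"]
      by (simp add: utility_order_zero_first payment_empty item_value_def)
  next
    case False
    then show ?thesis
      using len payment_nonneg_at_start[of 1 s', OF _ nonneg] m_pos
      by (simp add: utility_order_zero_first bval_market_pos H'_def)
  qed
  then show ?thesis using on_path by (simp add: H_def H'_def)
qed

lemma no_profitable_deviation_item_sold:
  assumes h: "length h < m" "h \<noteq> []" "won (favoured_tie (m + 1)) h 0 = {}"
    and i: "0 < i" "i < m + 1" "i - 1 < length h" and nonneg: "\<And>g. 0 \<le> s' g"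
  shows "utility (market m) (order_zero_first m) (favoured_tie (m + 1)) i
      (play (m + 1) m ((low_revenue_bids m)(i := s')) h)
    \<le> utility (market m) (order_zero_first m) (favoured_tie (m + 1)) i
      (play (m + 1) m (low_revenue_bids m) h)"
proof -
  define H where "H = play (m + 1) m (low_revenue_bids m) h"
  define H' where "H' = play (m + 1) m ((low_revenue_bids m)(i := s')) h"
  have len: "length H = m" "length H' = m" and prefix: "take (length h) H = h" "take (length h) H' = h"
    using h(1) by (simp_all add: H_def H'_def)
  have "(H ! k) i = 0" if "length h \<le> k" "k < length H" for k
    using play_before_zero_won(2)[OF h(2) _ h(3) that(1)] that i len by (simp add: H_def)
  then have "payment (favoured_tie (m + 1)) H i = payment (favoured_tie (m + 1)) h i"
    by (rule payment_prefix_eq[OF prefix(1)])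
  moreover have "payment (favoured_tie (m + 1)) h i \<le> payment (favoured_tie (m + 1)) H' i"
    by (rule payment_prefix_le(1)[OF prefix(2)])
      (use len nth_play_upd(1) i nonneg in \<open>simp add: H'_def\<close>)
  moreover have "bval (market m) i (won (favoured_tie (m + 1)) H' i)
      \<le> bval (market m) i (won (favoured_tie (m + 1)) H i)"
    using won_prefix[OF prefix(1), of "favoured_tie (m + 1)" i]
      won_prefix[OF prefix(2), of "favoured_tie (m + 1)" i] i
    by (intro bval_market_mono) blast+
  ultimately have "utility (market m) (order_zero_first m) (favoured_tie (m + 1)) i H'
      \<le> utility (market m) (order_zero_first m) (favoured_tie (m + 1)) i H"
    using len by (simp add: utility_order_zero_first)
  then show ?thesis by (simp add: H_def H'_def)
qed

lemma utility_item_pending: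
  assumes h: "length h < m" "h \<noteq> []" "won (favoured_tie (m + 1)) h 0 = {}"
    and i: "0 < i" "i < m + 1" "length h \<le> i - 1"
  shows "utility (market m) (order_zero_first m) (favoured_tie (m + 1)) i
      (play (m + 1) m (low_revenue_bids m) h)
    = item_value m (i - 1) - (payment (favoured_tie (m + 1)) h i + 1)"
proof -
  define H where "H = play (m + 1) m (low_revenue_bids m) h"
  have len: "length H = m" and prefix: "take (length h) H = h" using h(1) by (simp_all add: H_def)
  have "favoured_tie (m + 1) (take k H) (H ! k) = Suc k" if "length h \<le> k" "k < m" for k
    using play_before_zero_won(3)[OF h(2) _ h(3) that] h(1) by (simp add: H_def)
  then have later_won: "{k \<in> won (favoured_tie (m + 1)) H i. length h \<le> k} = {i - 1}"
    using i len by (auto simp: won_def)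
  have "H ! (i - 1) = (\<lambda>j. if j = 0 \<or> j = i then 1 else 0)"
    using play_before_zero_won(2)[OF h(2) _ h(3) i(3)] h(1) i by (simp add: H_def)
  then have "payment (favoured_tie (m + 1)) H i = payment (favoured_tie (m + 1)) h i + 1"
    using payment_prefix_split[OF prefix, of "favoured_tie (m + 1)" i] unfolding later_won by simp
  moreover have "i - 1 \<in> won (favoured_tie (m + 1)) H i" using later_won by blast
  ultimately show ?thesis using len i by (simp add: utility_order_zero_first bval_market_pos H_def)
qed

lemma no_profitable_deviation_item_pending:
  assumes h: "length h < m" "h \<noteq> []" "won (favoured_tie (m + 1)) h 0 = {}"
    and i: "0 < i" "i < m + 1" "length h \<le> i - 1" and nonneg: "\<And>g. 0 \<le> s' g"
  shows "utility (market m) (order_zero_first m) (favoured_tie (m + 1)) i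
      (play (m + 1) m ((low_revenue_bids m)(i := s')) h)
    \<le> utility (market m) (order_zero_first m) (favoured_tie (m + 1)) i
      (play (m + 1) m (low_revenue_bids m) h)"
proof -
  define H' where "H' = play (m + 1) m ((low_revenue_bids m)(i := s')) h"
  have len: "length H' = m" and prefix: "take (length h) H' = h" using h(1) by (simp_all add: H'_def)
  have H'_nonneg: "0 \<le> (H' ! k) i" if "length h \<le> k" "k < length H'" for k
    using nth_play_upd(1)[where i = i and h = h and k = k] that i nonneg len by (simp add: H'_def)
  have H'_others: "(H' ! k) j = (if won (favoured_tie (m + 1)) (take k H') 0 = {} \<and> (j = 0 \<or> j = Suc k)
      then 1 else 0)" if "length h \<le> k" "k < m" "j \<noteq> i" "j < m + 1" for k j
    using nth_play_upd(2)[where i = i and j = j and h = h and k = k] that len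
    by (simp add: H'_def bid_profile_def low_revenue_bids_def)
  \<comment> \<open>whatever buyer \<open>i\<close> does, buyer 0 still bids 1 in auction \<open>i - 1\<close>\<close>
  have "won (favoured_tie (m + 1)) (take (i - 1) H') 0 = {}"
    by (rule favoured_tie_zero_stays_empty[of "length h"])
      (use h i len prefix H'_others in \<open>auto simp: Suc_le_eq\<close>)
  then have zero_bid: "(H' ! (i - 1)) 0 = 1" using H'_others[of "i - 1" 0] i by simp
  have "utility (market m) (order_zero_first m) (favoured_tie (m + 1)) i H'
      \<le> item_value m (i - 1) - (payment (favoured_tie (m + 1)) h i + 1)"
  proof (cases "i - 1 \<in> won (favoured_tie (m + 1)) H' i")
    case True
    then have "(H' ! (i - 1)) 0 \<le> (H' ! (i - 1)) i"
      using favoured_tie_highest[of 0 "H' ! (i - 1)" "take (i - 1) H'"] by (simp add: won_def)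
    moreover have "payment (favoured_tie (m + 1)) h i + (H' ! (i - 1)) i
        \<le> payment (favoured_tie (m + 1)) H' i"
      by (rule payment_prefix_le(2)[OF prefix H'_nonneg True i(3)])
    ultimately show ?thesis
      using len zero_bid bval_market_le_item_value[OF i(1), of m "won (favoured_tie (m + 1)) H' i"]
      by (simp add: utility_order_zero_first)
  next
    case False
    have "payment (favoured_tie (m + 1)) h i \<le> payment (favoured_tie (m + 1)) H' i"
      by (rule payment_prefix_le(1)[OF prefix H'_nonneg])
    then show ?thesis
      using False len i item_value_ge_1[of m "i - 1"]
      by (simp add: utility_order_zero_first bval_market_pos)
  qed
  then show ?thesis using utility_item_pending[OF h i] by (simp add: H'_def)
qed

lemma is_SPE_low_revenue_bids:
  "is_SPE (m + 1) m (market m) (order_zero_first m) (favoured_tie (m + 1)) (low_revenue_bids m)"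
  unfolding is_SPE_def strategy_profile_def
proof (intro conjI allI impI)
  show "0 \<le> low_revenue_bids m i h" for i h by (simp add: low_revenue_bids_def)
next
  fix h :: hist and i :: nat and s' :: "hist \<Rightarrow> real"
  assume "valid_hist (m + 1) m h \<and> length h < m" "i < m + 1" "\<forall>g. 0 \<le> s' g"
  then have h: "length h < m" and i: "i < m + 1" and nonneg: "\<And>g. 0 \<le> s' g" by simp_all
  consider "won (favoured_tie (m + 1)) h 0 \<noteq> {}"
    | "won (favoured_tie (m + 1)) h 0 = {}" "i = 0"
    | "h = []" "i = 1"
    | "h = []" "2 \<le> i"
    | "won (favoured_tie (m + 1)) h 0 = {}" "0 < i" "h \<noteq> []" "i - 1 < length h"
    | "won (favoured_tie (m + 1)) h 0 = {}" "0 < i" "h \<noteq> []" "length h \<le> i - 1"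
    by linarith
  then show "utility (market m) (order_zero_first m) (favoured_tie (m + 1)) i
      (play (m + 1) m ((low_revenue_bids m)(i := s')) h)
    \<le> utility (market m) (order_zero_first m) (favoured_tie (m + 1)) i
      (play (m + 1) m (low_revenue_bids m) h)"
  proof cases
    case 1 then show ?thesis using no_profitable_deviation_after_zero_won h i nonneg by blast
  next
    case 2 then show ?thesis using zero_no_profitable_deviation_before_won h nonneg by blast
  next
    case 3 then show ?thesis using no_profitable_deviation_at_start_contested nonneg by simp
  next
    case 4 then show ?thesis using no_profitable_deviation_at_start_free_item i nonneg by simp
  next
    case 5 then show ?thesis using no_profitable_deviation_item_sold h i nonneg by blast
  next
    case 6 then show ?thesis using no_profitable_deviation_item_pending h i nonneg by blast
  qed
qed

lemma revenue_low_revenue_bids: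
  "revenue (favoured_tie (m + 1)) (play (m + 1) m (low_revenue_bids m) []) = 1"
proof -
  define H where "H = play (m + 1) m (low_revenue_bids m) []"
  obtain m' where m': "m = Suc m'" using m_pos by (cases m) auto
  have "revenue (favoured_tie (m + 1)) H
      = (\<Sum>k<Suc m'. (H ! k) (favoured_tie (m + 1) (take k H) (H ! k)))"
    using m' by (simp add: revenue_def H_def)
  also have "\<dots> = (H ! 0) (favoured_tie (m + 1) [] (H ! 0))
      + (\<Sum>k<m'. (H ! Suc k) (favoured_tie (m + 1) (take (Suc k) H) (H ! Suc k)))"
    by (subst sum.lessThan_Suc_shift) simp
  also have "(\<Sum>k<m'. (H ! Suc k) (favoured_tie (m + 1) (take (Suc k) H) (H ! Suc k))) = 0"
    using play_from_start(3) m' by (simp add: H_def)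
  finally show ?thesis using play_from_start(1,2) by (simp add: H_def)
qed

end

theorem mainTheorem12:
  shows "\<exists>V :: nat \<Rightarrow> nat \<Rightarrow> nat \<Rightarrow> real.
    (\<lambda>m. opt_welfare (V m) (m + 1) m - real m) \<longlonglongrightarrow> 0 \<and>
    (\<forall>m\<ge>1.
       (\<forall>i<m + 1. \<forall>j<m. 0 \<le> V m i j) \<and>
       (\<exists>\<sigma>1 \<tau>1 s. is_order m \<sigma>1 \<and> tie_rule (m + 1) \<tau>1 \<and>
          is_SPE (m + 1) m (V m) \<sigma>1 \<tau>1 s \<and> revenue \<tau>1 (play (m + 1) m s []) = 1) \<and>
       (\<exists>\<sigma>2. is_order m \<sigma>2 \<and>
          (\<forall>\<tau> s. tie_rule (m + 1) \<tau> \<and> is_SPE (m + 1) m (V m) \<sigma>2 \<tau> s \<longrightarrow>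
             revenue \<tau> (play (m + 1) m s []) \<ge> real m)))"
proof (intro exI[of _ market] conjI allI impI)
  show "(\<lambda>m. opt_welfare (market m) (m + 1) m - real m) \<longlonglongrightarrow> 0"
    by (rule opt_welfare_market_asymptotic)
  show "0 \<le> market m i j" for m i j by (rule market_nonneg)
  fix m :: nat assume m: "1 \<le> m"
  show "\<exists>\<sigma>1 \<tau>1 s. is_order m \<sigma>1 \<and> tie_rule (m + 1) \<tau>1 \<and>
      is_SPE (m + 1) m (market m) \<sigma>1 \<tau>1 s \<and> revenue \<tau>1 (play (m + 1) m s []) = 1"
    using is_order_zero_first tie_rule_favoured_tie[of "m + 1"]
      is_SPE_low_revenue_bids[OF m] revenue_low_revenue_bids[OF m] by auto
  show "\<exists>\<sigma>2. is_order m \<sigma>2 \<and>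
      (\<forall>\<tau> s. tie_rule (m + 1) \<tau> \<and> is_SPE (m + 1) m (market m) \<sigma>2 \<tau> s \<longrightarrow>
         revenue \<tau> (play (m + 1) m s []) \<ge> real m)"
    using is_order_zero_last[OF m] revenue_ge_items[OF m] by blast
qed

end
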